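(* Let $d\ge 2$. There are a constant $C>0$ and $n_0(d)$ depending only on $d$ such that for all $n\ge n_0(d)$: if $\mathcal{F}$, $B_i$ are as in the context, $J\subseteq[n]$ with $|J|\le n/4$, and $K\ge 0$ is a real number with $|E(\mathcal{G}_J)|\ge\binom{n-|J|}{d}-Kn$, then $$|\mathcal{T}_J^4\cup\mathcal{T}_J^5|\le(|J|-1)\binom{n-|J|}{d-1}+CK.$$
   Context: Let $\mathcal{F}=\{F_1,\dots,F_m\}\subseteq\binom{[n]}{d+1}$ consist of distinct sets and have VC-dimension at most $d$ (no $(d+1)$-set $S$ is shattered, i.e. no $S$ such that every $A\subseteq S$ equals $F\cap S$ for some $F\in\mathcal{F}$). For $i\in[m]$, call $B\subsetneq F_i$ admissible for $F_i$ if $F\cap F_i\neq B$ for every $F\in\mathcal{F}$. For each $i$, $B_i$ is a fixed admissible set for $F_i$ of maximum cardinality among all admissible sets. For $J\subseteq[n]$, $\mathcal{G}_J$ is the $d$-uniform hypergraph on vertex set $[n]\setminus J$ with edge set $E(\mathcal{G}_J):=\{F_k\setminus J: k\in[m],\ |F_k\cap J|=1\}$. $\mathcal{T}_J^4$ is the set of $F_k\in\mathcal{F}$ with $|F_k\cap J|=1$, $|B_k|=d$ and $|B_k\cap J|=1$; $\mathcal{T}_J^5$ is the set of $F_k\in\mathcal{F}$ with $|F_k\cap J|=2$ and $F_k\setminus J\subseteq B_k$. *)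

theory Defs
  imports Complex_Main
begin

text \<open>The family F is represented as a set of distinct (d+1)-subsets of [n] = {1..n};
  the choice of the sets B_i is represented as a function B on the members of F.\<close>

definition shatters :: "nat set set \<Rightarrow> nat set \<Rightarrow> bool" where
  "shatters F S \<longleftrightarrow> (\<forall>A. A \<subseteq> S \<longrightarrow> (\<exists>X\<in>F. X \<inter> S = A))"

definition vc_dim_le :: "nat set set \<Rightarrow> nat \<Rightarrow> bool" where
  "vc_dim_le F d \<longleftrightarrow> (\<forall>S. card S = d + 1 \<longrightarrow> \<not> shatters F S)"

definition admissible :: "nat set set \<Rightarrow> nat set \<Rightarrow> nat set \<Rightarrow> bool" where
  "admissible F Fi B \<longleftrightarrow> B \<subset> Fi \<and> (\<forall>X\<in>F. X \<inter> Fi \<noteq> B)"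

definition max_admissible_choice :: "nat set set \<Rightarrow> (nat set \<Rightarrow> nat set) \<Rightarrow> bool" where
  "max_admissible_choice F B \<longleftrightarrow>
     (\<forall>Fi\<in>F. admissible F Fi (B Fi) \<and>
        (\<forall>B'. admissible F Fi B' \<longrightarrow> card B' \<le> card (B Fi)))"

definition edges_G :: "nat set set \<Rightarrow> nat set \<Rightarrow> nat set set" where
  "edges_G F J = {X - J | X. X \<in> F \<and> card (X \<inter> J) = 1}"

definition T4 :: "nat set set \<Rightarrow> (nat set \<Rightarrow> nat set) \<Rightarrow> nat \<Rightarrow> nat set \<Rightarrow> nat set set" where
  "T4 F B d J = {X \<in> F. card (X \<inter> J) = 1 \<and> card (B X) = d \<and> card (B X \<inter> J) = 1}"

definition T5 :: "nat set set \<Rightarrow> (nat set \<Rightarrow> nat set) \<Rightarrow> nat set \<Rightarrow> nat set set" where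
  "T5 F B J = {X \<in> F. card (X \<inter> J) = 2 \<and> X - J \<subseteq> B X}"

end

theory Submission
  imports Defs
begin

text \<open>Every member X of T = T_J^4 \<union> T_J^5 has a core S = B X - J, a (d-1)-subset of
  V = [n] - J, and we count T fibre by fibre. In a fibre, the members whose B X meets J are
  labelled injectively by the vertex of B X in J, because admissibility forces a d-set B X to lie
  in no other member of F; the remaining members are determined by their pairs X \<inter> J, which
  form an intersecting family of 2-sets on vertices that no label uses. Hence a fibre has at most
  |J| members, and at most |J| - 1 if S extends to more than |J| edges of G_J: two such edges
  share their vertex x in J, so x is not a label and lies on every pair. The cores with at most
  |J| extensions miss at least n/4 of the d-sets containing them, and double counting against the
  at most Kn non-edges of G_J shows there are at most 4dK of them.\<close>

lemma card_star_pairs_le: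
  assumes "finite U" and "Q \<subseteq> {e. e \<subseteq> U \<and> card e = 2}" and "x \<in> U"
    and "\<And>e. e \<in> Q \<Longrightarrow> x \<in> e"
  shows "card Q \<le> card U - 1"
proof -
  have "inj_on (\<lambda>e. e - {x}) Q"
    by (rule inj_onI) (metis assms(4) insert_Diff)
  then have "card Q = card ((\<lambda>e. e - {x}) ` Q)"
    by (simp add: card_image)
  also have "\<dots> \<le> card {s. s \<subseteq> U - {x} \<and> card s = 1}"
  proof (rule card_mono)
    show "finite {s. s \<subseteq> U - {x} \<and> card s = 1}"
      using assms(1) by simp
    show "(\<lambda>e. e - {x}) ` Q \<subseteq> {s. s \<subseteq> U - {x} \<and> card s = 1}"
      using assms by (force intro: finite_subset)
  qed
  also have "\<dots> = card U - 1"
    using assms(1,3) by (simp add: n_subsets)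
  finally show ?thesis .
qed

lemma card_2_doubletonE:
  assumes "card e = 2" and "c \<in> e"
  obtains y where "e = {c, y}" and "y \<noteq> c"
  using assms card_2_iff[of e] by (auto simp: doubleton_eq_iff)

lemma card_intersecting_pairs_le:
  assumes fin: "finite U" and Q: "Q \<subseteq> {e. e \<subseteq> U \<and> card e = 2}"
    and meets: "\<And>e f. e \<in> Q \<Longrightarrow> f \<in> Q \<Longrightarrow> e \<inter> f \<noteq> {}"
  shows "card Q \<le> card U"
proof (cases "Q = {}")
  case False
  then obtain a b where ab: "{a, b} \<in> Q" "a \<noteq> b"
    using Q by (force simp: card_2_iff)
  then have "a \<in> U"
    using Q by blast
  show ?thesis
  proof (cases "\<forall>e\<in>Q. b \<in> e")
    case True
    then show ?thesis
      using card_star_pairs_le[OF fin Q, of b] ab Q by auto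
  next
    case False
    then obtain e where e: "e \<in> Q" "b \<notin> e" "a \<in> e"
      using meets[OF _ ab(1)] by blast
    moreover have "card e = 2"
      using e(1) Q by blast
    ultimately obtain x where x: "{a, x} \<in> Q" "x \<noteq> b"
      by (metis card_2_doubletonE insertCI)
    have "f = {b, x}" if f: "f \<in> Q" "a \<notin> f" for f
    proof -
      have "b \<in> f" "x \<in> f" "card f = 2"
        using meets[OF f(1) ab(1)] meets[OF f(1) x(1)] f Q by auto
      then show ?thesis
        using x(2) by (metis card_2_doubletonE insertE singletonD)
    qed
    then have "card Q \<le> card (insert {b, x} {e \<in> Q. a \<in> e})"
      using Q fin by (intro card_mono) (auto intro: rev_finite_subset)
    also have "\<dots> \<le> Suc (card {e \<in> Q. a \<in> e})"
      using Q fin by (simp add: card_insert_if finite_subset)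
    also have "card {e \<in> Q. a \<in> e} \<le> card U - 1"
      using \<open>a \<in> U\<close> Q by (intro card_star_pairs_le[OF fin]) auto
    finally show ?thesis
      using \<open>a \<in> U\<close> fin by (cases "card U") auto
  qed
qed simp

lemma admissible_codim_one_subset_eq:
  assumes adm: "admissible F X BX" and Y: "Y \<in> F" and sub: "BX \<subseteq> Y" and fin: "finite X"
    and card_BX: "card BX + 1 = card X" and card_Y: "card Y = card X"
  shows "X = Y"
proof -
  have "BX \<subset> Y \<inter> X"
    using adm Y sub unfolding admissible_def by blast
  then have "card BX < card (Y \<inter> X)"
    using fin by (meson finite_Int psubset_card_mono)
  then have "X \<subseteq> Y"
    using card_BX fin card_seteq[of X "Y \<inter> X"] by auto
  moreover have "finite Y"
    using card_Y card_BX card.infinite by fastforce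
  ultimately show ?thesis
    using card_Y by (metis card_subset_eq)
qed

lemma sum_card_extensions_le:
  assumes "finite Ss" and "finite M" and "\<And>D. D \<in> M \<Longrightarrow> finite D \<and> card D = d"
  shows "(\<Sum>S\<in>Ss. card {z. z \<notin> S \<and> insert z S \<in> M}) \<le> d * card M"
proof -
  let ?ext = "\<lambda>S. {z. z \<notin> S \<and> insert z S \<in> M}"
  have "finite (\<Union>M)"
    using assms(2,3) by blast
  then have fin_ext: "finite (?ext S)" for S
    by (rule rev_finite_subset) blast
  have "(\<Sum>S\<in>Ss. card (?ext S)) = card (SIGMA S:Ss. ?ext S)"
    using assms(1) fin_ext by (simp add: card_SigmaI)
  also have "\<dots> \<le> card (SIGMA D:M. D)"
  proof (rule card_inj_on_le)
    show "inj_on (\<lambda>(S, z). (insert z S, z)) (SIGMA S:Ss. ?ext S)"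
      by (rule inj_onI) (auto simp: insert_ident)
    show "(\<lambda>(S, z). (insert z S, z)) ` (SIGMA S:Ss. ?ext S) \<subseteq> (SIGMA D:M. D)"
      by auto
    show "finite (SIGMA D:M. D)"
      using assms(2,3) by blast
  qed
  also have "\<dots> = d * card M"
    using assms(2,3) by (simp add: card_SigmaI)
  finally show ?thesis .
qed

locale admissible_family =
  fixes n d :: nat and F :: "nat set set" and B :: "nat set \<Rightarrow> nat set" and J :: "nat set"
  assumes F_sub: "X \<in> F \<Longrightarrow> X \<subseteq> {1..n}"
    and F_card: "X \<in> F \<Longrightarrow> card X = d + 1"
    and B_admissible: "X \<in> F \<Longrightarrow> admissible F X (B X)"
    and J_sub: "J \<subseteq> {1..n}"
    and d_pos: "1 \<le> d"
begin

definition V :: "nat set" where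
  "V = {1..n} - J"

definition T :: "nat set set" where
  "T = T4 F B d J \<union> T5 F B J"

definition fibre :: "nat set \<Rightarrow> nat set set" where
  "fibre S = {X \<in> T. B X - J = S}"

definition fibre_lab :: "nat set \<Rightarrow> nat set set" where
  "fibre_lab S = {X \<in> fibre S. B X \<inter> J \<noteq> {}}"

definition fibre_pair :: "nat set \<Rightarrow> nat set set" where
  "fibre_pair S = {X \<in> fibre S. B X \<inter> J = {}}"

definition pair_traces :: "nat set \<Rightarrow> nat set set" where
  "pair_traces S = (\<lambda>X. X \<inter> J) ` fibre_pair S"

definition lab :: "nat set \<Rightarrow> nat" where
  "lab X = the_elem (B X \<inter> J)"

definition extensions :: "nat set \<Rightarrow> nat set" where
  "extensions S = {z \<in> V - S. insert z S \<in> edges_G F J}"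

lemma finite_J: "finite J"
  using J_sub finite_subset by blast

lemma finite_V: "finite V"
  by (simp add: V_def)

lemma card_V: "card V = n - card J"
  using J_sub finite_J by (simp add: V_def card_Diff_subset)

lemma finite_member: "X \<in> F \<Longrightarrow> finite X"
  using F_sub finite_subset by blast

lemma finite_T: "finite T"
proof -
  have "T \<subseteq> Pow {1..n}"
    using F_sub by (auto simp: T_def T4_def T5_def)
  then show ?thesis
    by (simp add: finite_subset)
qed

lemma B_psubset: "X \<in> F \<Longrightarrow> B X \<subset> X"
  using B_admissible unfolding admissible_def by blast

lemma B_not_trace: "X \<in> F \<Longrightarrow> Y \<in> F \<Longrightarrow> Y \<inter> X \<noteq> B X"
  using B_admissible unfolding admissible_def by blast

lemma T_subset_F: "T \<subseteq> F"
  by (auto simp: T_def T4_def T5_def)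

lemma T_core:
  assumes "X \<in> T"
  shows "B X - J \<subseteq> V" "card (B X - J) = d - 1"
proof -
  have XF: "X \<in> F"
    using assms T_subset_F by blast
  have BX: "B X \<subseteq> X" and fin: "finite X" "finite (B X)"
    using B_psubset[OF XF] finite_member[OF XF] by (auto intro: rev_finite_subset)
  show "B X - J \<subseteq> V"
    using BX F_sub[OF XF] by (auto simp: V_def)
  show "card (B X - J) = d - 1"
  proof (cases "X \<in> T4 F B d J")
    case True
    then show ?thesis
      using fin by (simp add: T4_def card_Diff_subset_Int)
  next
    case False
    then have "card (X \<inter> J) = 2" "X - J \<subseteq> B X"
      using assms by (auto simp: T_def T5_def)
    then have "B X - J = X - J"
      using BX by blast
    moreover have "card (X - J) = card X - card (X \<inter> J)"
      using fin by (simp add: card_Diff_subset_Int)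
    ultimately show ?thesis
      using F_card[OF XF] \<open>card (X \<inter> J) = 2\<close> by simp
  qed
qed

lemma T_labelled:
  assumes X: "X \<in> T" and meets: "B X \<inter> J \<noteq> {}"
  shows "B X \<inter> J = {lab X}" "card (B X) = d"
proof -
  have XF: "X \<in> F"
    using X T_subset_F by blast
  have fin: "finite X" "finite (B X)"
    using B_psubset[OF XF] finite_member[OF XF] by (auto intro: rev_finite_subset)
  have "card (B X \<inter> J) = 1"
  proof (cases "X \<in> T4 F B d J")
    case False
    then have "card (X \<inter> J) = 2" "X - J \<subseteq> B X"
      using X by (auto simp: T_def T5_def)
    moreover have "B X \<subset> X"
      using B_psubset[OF XF] .
    ultimately have "B X \<inter> J \<subset> X \<inter> J"
      by auto
    then have "card (B X \<inter> J) < 2"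
      using \<open>card (X \<inter> J) = 2\<close> fin by (metis finite_Int psubset_card_mono)
    moreover have "card (B X \<inter> J) \<noteq> 0"
      using meets fin by simp
    ultimately show ?thesis
      by linarith
  qed (simp add: T4_def)
  then obtain j where "B X \<inter> J = {j}"
    by (rule card_1_singletonE)
  then show "B X \<inter> J = {lab X}"
    by (simp add: lab_def)
  have "card (B X) = card (B X \<inter> J) + card (B X - J)"
    using fin(2) by (rule card_Int_Diff)
  then show "card (B X) = d"
    using T_core[OF X] \<open>card (B X \<inter> J) = 1\<close> d_pos by simp
qed

lemma T_unlabelled:
  assumes X: "X \<in> T" and avoids: "B X \<inter> J = {}"
  shows "X = B X \<union> (X \<inter> J)" "card (X \<inter> J) = 2"
proof -
  have "X \<in> T5 F B J"
    using X avoids by (auto simp: T_def T4_def)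
  then have "card (X \<inter> J) = 2" "X - J \<subseteq> B X"
    by (auto simp: T5_def)
  moreover have "B X \<subseteq> X"
    using B_psubset X T_subset_F by blast
  ultimately show "X = B X \<union> (X \<inter> J)" "card (X \<inter> J) = 2"
    by auto
qed

lemma fibre_labD:
  assumes "X \<in> fibre_lab S"
  shows "X \<in> F" "lab X \<in> J" "B X = insert (lab X) S" "card (B X) = d"
proof -
  have X: "X \<in> T" "B X - J = S" "B X \<inter> J \<noteq> {}"
    using assms by (auto simp: fibre_lab_def fibre_def)
  show "X \<in> F"
    using X(1) T_subset_F by blast
  show "lab X \<in> J" "B X = insert (lab X) S" "card (B X) = d"
    using T_labelled[OF X(1,3)] X(2) by auto
qed

lemma fibre_pairD:
  assumes "X \<in> fibre_pair S"
  shows "X \<in> F" "B X = S" "X = S \<union> (X \<inter> J)" "card (X \<inter> J) = 2"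
proof -
  have X: "X \<in> T" "B X - J = S" "B X \<inter> J = {}"
    using assms by (auto simp: fibre_pair_def fibre_def)
  show "X \<in> F"
    using X(1) T_subset_F by blast
  show "B X = S"
    using X(2,3) by auto
  then show "X = S \<union> (X \<inter> J)" "card (X \<inter> J) = 2"
    using T_unlabelled[OF X(1,3)] by simp_all
qed

lemma fibre_lab_unique:
  assumes X: "X \<in> fibre_lab S" and Y: "Y \<in> F" and sub: "insert (lab X) S \<subseteq> Y"
  shows "X = Y"
proof (rule admissible_codim_one_subset_eq)
  show "admissible F X (B X)" "finite X"
    using B_admissible finite_member fibre_labD(1)[OF X] by blast+
  show "B X \<subseteq> Y" "card (B X) + 1 = card X" "card Y = card X"
    using sub fibre_labD[OF X] F_card Y by simp_all
qed (rule Y)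

lemma inj_on_lab: "inj_on lab (fibre_lab S)"
proof (rule inj_onI)
  fix X Y assume X: "X \<in> fibre_lab S" and Y: "Y \<in> fibre_lab S" and "lab X = lab Y"
  then have "insert (lab X) S \<subseteq> Y"
    using fibre_labD(3)[OF Y] B_psubset[OF fibre_labD(1)[OF Y]] by auto
  then show "X = Y"
    by (rule fibre_lab_unique[OF X fibre_labD(1)[OF Y]])
qed

lemma fibre_pair_meets:
  assumes Y: "Y \<in> fibre_pair S" and G: "G \<in> F" "S \<subseteq> G"
  shows "G \<inter> (Y \<inter> J) \<noteq> {}"
proof
  assume "G \<inter> (Y \<inter> J) = {}"
  then have "G \<inter> Y = B Y"
    using fibre_pairD(2,3)[OF Y] G(2) by blast
  then show False
    using B_not_trace[OF fibre_pairD(1)[OF Y] G(1)] by simp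
qed

lemma fibre_split: "card (fibre S) = card (fibre_lab S) + card (fibre_pair S)"
proof -
  have "fibre S = fibre_lab S \<union> fibre_pair S" "fibre_lab S \<inter> fibre_pair S = {}"
    by (auto simp: fibre_lab_def fibre_pair_def)
  moreover have "finite (fibre S)"
    using finite_T by (simp add: fibre_def)
  ultimately show ?thesis
    by (simp add: card_Un_disjoint)
qed

lemma lab_notin_fibre_pair:
  assumes X: "X \<in> fibre_lab S" and Y: "Y \<in> fibre_pair S"
  shows "lab X \<notin> Y"
proof
  assume "lab X \<in> Y"
  then have "X = Y"
    using fibre_lab_unique[OF X fibre_pairD(1)[OF Y]] fibre_pairD(3)[OF Y] by blast
  then show False
    using X Y by (simp add: fibre_lab_def fibre_pair_def)
qed

lemma card_fibre_pair: "card (fibre_pair S) = card (pair_traces S)"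
proof -
  have "inj_on (\<lambda>X. X \<inter> J) (fibre_pair S)"
    by (rule inj_onI) (metis fibre_pairD(3))
  then show ?thesis
    by (simp add: pair_traces_def card_image)
qed

lemma pair_traces_subset:
  assumes "\<Union>(pair_traces S) \<subseteq> W"
  shows "pair_traces S \<subseteq> {e. e \<subseteq> W \<and> card e = 2}"
  using assms fibre_pairD(4) by (auto simp: pair_traces_def)

lemma card_fibre_le_pairs:
  assumes "W \<subseteq> J" and "\<And>X. X \<in> fibre_lab S \<Longrightarrow> lab X \<notin> W"
  shows "card (fibre S) \<le> card J - card W + card (pair_traces S)"
proof -
  have "card (fibre_lab S) = card (lab ` fibre_lab S)"
    by (simp add: card_image inj_on_lab)
  also have "\<dots> \<le> card (J - W)"
    using assms finite_J fibre_labD(2) by (intro card_mono) auto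
  also have "\<dots> = card J - card W"
    using assms(1) finite_J by (simp add: card_Diff_subset finite_subset)
  finally show ?thesis
    by (simp add: fibre_split card_fibre_pair)
qed

lemma card_fibre_le: "card (fibre S) \<le> card J"
proof -
  let ?W = "\<Union>(pair_traces S)"
  have W: "?W \<subseteq> J" "finite ?W"
    using finite_J by (auto simp: pair_traces_def intro: rev_finite_subset)
  have "card (pair_traces S) \<le> card ?W"
  proof (rule card_intersecting_pairs_le[OF W(2) pair_traces_subset[OF order_refl]])
    fix e f assume "e \<in> pair_traces S" "f \<in> pair_traces S"
    then obtain X Y where "X \<in> fibre_pair S" "Y \<in> fibre_pair S" "e = X \<inter> J" "f = Y \<inter> J"
      by (auto simp: pair_traces_def)
    then show "e \<inter> f \<noteq> {}"
      using fibre_pair_meets[of Y S X] fibre_pairD(1,3)[of X S] by blast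
  qed
  moreover have "lab X \<notin> ?W" if "X \<in> fibre_lab S" for X
    using lab_notin_fibre_pair[OF that] by (auto simp: pair_traces_def)
  ultimately have "card (fibre S) \<le> card J - card ?W + card ?W"
    using card_fibre_le_pairs[OF W(1)] by fastforce
  then show ?thesis
    using card_mono[OF finite_J W(1)] by simp
qed

lemma extensionsE:
  assumes "z \<in> extensions S"
  obtains x where "x \<in> J" "insert x (insert z S) \<in> F" "z \<notin> J" "z \<notin> S" "S \<inter> J = {}"
proof -
  have z: "z \<in> V" "z \<notin> S" "insert z S \<in> edges_G F J"
    using assms by (auto simp: extensions_def)
  then obtain X where X: "insert z S = X - J" "X \<in> F" "card (X \<inter> J) = 1"
    by (auto simp: edges_G_def)
  then obtain x where "X \<inter> J = {x}"
    using card_1_singletonE by blast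
  then have "X = insert x (insert z S)" "x \<in> J"
    using X(1) by auto
  moreover have "S \<inter> J = {}" "z \<notin> J"
    using X(1) by auto
  ultimately show thesis
    using that X(2) z(2) by blast
qed

lemma extensions_pigeonhole:
  assumes "card J < card (extensions S)"
  obtains x z z' where "x \<in> J" "z \<noteq> z'" "z \<notin> J" "z \<notin> S" "S \<inter> J = {}"
    "insert x (insert z S) \<in> F" "insert x (insert z' S) \<in> F"
proof -
  define f where "f z = (SOME x. x \<in> J \<and> insert x (insert z S) \<in> F)" for z
  have f: "f z \<in> J" "insert (f z) (insert z S) \<in> F" if "z \<in> extensions S" for z
    using someI_ex[of "\<lambda>x. x \<in> J \<and> insert x (insert z S) \<in> F"] extensionsE[OF that]
    unfolding f_def by blast+
  have "card (f ` extensions S) \<le> card J"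
    using f(1) finite_J by (intro card_mono) auto
  then have "\<not> inj_on f (extensions S)"
    using assms card_image by fastforce
  then obtain z z' where "z \<in> extensions S" "z' \<in> extensions S" "z \<noteq> z'" "f z = f z'"
    by (auto simp: inj_on_def)
  then show thesis
    using that[of "f z" z z'] f extensionsE by metis
qed

text \<open>Two edges of G_J through S sharing their vertex x in J cost the fibre one member:
  x cannot be a label, and it lies on every pair.\<close>
lemma card_fibre_less:
  assumes "card J < card (extensions S)"
  shows "card (fibre S) < card J"
proof -
  obtain x z z' where x: "x \<in> J" and z: "z \<noteq> z'" "z \<notin> J" "z \<notin> S" and SJ: "S \<inter> J = {}"
    and G: "insert x (insert z S) \<in> F" and G': "insert x (insert z' S) \<in> F"
    by (rule extensions_pigeonhole[OF assms])
  let ?W = "insert x (\<Union>(pair_traces S))"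
  have W: "?W \<subseteq> J" "finite ?W" "x \<in> ?W"
    using finite_J x by (auto simp: pair_traces_def intro: rev_finite_subset)
  have "card (pair_traces S) \<le> card ?W - 1"
  proof (rule card_star_pairs_le[OF W(2) pair_traces_subset W(3)])
    fix e assume "e \<in> pair_traces S"
    then obtain Y where Y: "Y \<in> fibre_pair S" "e = Y \<inter> J"
      by (auto simp: pair_traces_def)
    have "insert x (insert z S) \<inter> e \<noteq> {}"
      unfolding Y(2) by (rule fibre_pair_meets[OF Y(1) G]) blast
    moreover have "insert x (insert z S) \<inter> J = {x}"
      using x z(2) SJ by auto
    ultimately show "x \<in> e"
      using Y(2) by auto
  qed blast
  moreover have "lab X \<notin> ?W" if X: "X \<in> fibre_lab S" for X
  proof -
    have "X = insert x (insert z S)" if "lab X = x"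
      using fibre_lab_unique[OF X G] that by auto
    moreover have "X = insert x (insert z' S)" if "lab X = x"
      using fibre_lab_unique[OF X G'] that by auto
    ultimately have "lab X \<noteq> x"
      using z x by (metis insertE insertI1 insert_commute)
    then show ?thesis
      using lab_notin_fibre_pair[OF X] by (auto simp: pair_traces_def)
  qed
  ultimately have "card (fibre S) \<le> card J - card ?W + (card ?W - 1)"
    using card_fibre_le_pairs[OF W(1)] by fastforce
  moreover have "0 < card ?W" "card ?W \<le> card J"
    using W card_mono[OF finite_J W(1)] by (auto simp: card_gt_0_iff)
  ultimately show ?thesis
    by linarith
qed

definition cores :: "nat set set" where
  "cores = {S. S \<subseteq> V \<and> card S = d - 1}"

definition deficient :: "nat set set" where
  "deficient = {S \<in> cores. card (extensions S) \<le> card J}"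

definition non_edges :: "nat set set" where
  "non_edges = {D. D \<subseteq> V \<and> card D = d} - edges_G F J"

lemma finite_cores: "finite cores"
  using finite_V by (auto simp: cores_def)

lemma card_cores: "card cores = card V choose (d - 1)"
  using finite_V by (simp add: cores_def n_subsets)

lemma card_T_eq_sum_fibres: "card T = (\<Sum>S\<in>cores. card (fibre S))"
proof -
  have "T = (\<Union>S\<in>cores. fibre S)"
    using T_core by (auto simp: cores_def fibre_def)
  moreover have "finite (fibre S)" for S
    using finite_T by (simp add: fibre_def)
  moreover have "card (\<Union>S\<in>cores. fibre S) = (\<Sum>S\<in>cores. card (fibre S))"
    by (rule card_UN_disjoint) (use finite_cores \<open>\<And>S. finite (fibre S)\<close> in \<open>auto simp: fibre_def\<close>)
  ultimately show ?thesis
    by simp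
qed

lemma card_T_le_deficient:
  "real (card T) \<le> (real (card J) - 1) * real (card cores) + real (card deficient)"
proof -
  have "real (card T) = (\<Sum>S\<in>cores. real (card (fibre S)))"
    by (simp add: card_T_eq_sum_fibres)
  also have "\<dots> \<le> (\<Sum>S\<in>cores. (real (card J) - 1) + (if S \<in> deficient then 1 else 0))"
  proof (rule sum_mono)
    fix S assume "S \<in> cores"
    then show "real (card (fibre S)) \<le> real (card J) - 1 + (if S \<in> deficient then 1 else 0)"
      using card_fibre_le[of S] card_fibre_less[of S] by (auto simp: deficient_def)
  qed
  also have "\<dots> = (real (card J) - 1) * real (card cores) + real (card deficient)"
    using finite_cores by (simp add: sum.distrib sum.If_cases deficient_def Int_def)
  finally show ?thesis .
qed

lemma edges_G_subset: "edges_G F J \<subseteq> {D. D \<subseteq> V \<and> card D = d}"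
proof
  fix D assume "D \<in> edges_G F J"
  then obtain X where X: "D = X - J" "X \<in> F" "card (X \<inter> J) = 1"
    by (auto simp: edges_G_def)
  then show "D \<in> {D. D \<subseteq> V \<and> card D = d}"
    using F_sub[OF X(2)] F_card[OF X(2)] finite_member[OF X(2)]
    by (auto simp: V_def card_Diff_subset_Int)
qed

lemma card_non_edges:
  "real (card non_edges) = real (card V choose d) - real (card (edges_G F J))"
proof -
  have "card non_edges = card {D. D \<subseteq> V \<and> card D = d} - card (edges_G F J)"
    unfolding non_edges_def using edges_G_subset finite_V by (simp add: card_Diff_subset finite_subset)
  moreover have "card (edges_G F J) \<le> card {D. D \<subseteq> V \<and> card D = d}"
    using edges_G_subset finite_V by (simp add: card_mono)
  ultimately show ?thesis
    using finite_V by (simp add: n_subsets)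
qed

lemma sum_card_missing_le:
  "(\<Sum>S\<in>deficient. card (V - S - extensions S)) \<le> d * card non_edges"
proof -
  have "(\<Sum>S\<in>deficient. card (V - S - extensions S))
      \<le> (\<Sum>S\<in>deficient. card {z. z \<notin> S \<and> insert z S \<in> non_edges})"
  proof (rule sum_mono, rule card_mono)
    fix S assume "S \<in> deficient"
    then have "S \<subseteq> V" "card S = d - 1" "finite S"
      using finite_V by (auto simp: deficient_def cores_def intro: rev_finite_subset)
    then show "V - S - extensions S \<subseteq> {z. z \<notin> S \<and> insert z S \<in> non_edges}"
      using d_pos by (auto simp: extensions_def non_edges_def)
    show "finite {z. z \<notin> S \<and> insert z S \<in> non_edges}"
      using finite_V by (rule rev_finite_subset) (auto simp: non_edges_def)
  qed
  also have "\<dots> \<le> d * card non_edges"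
  proof (rule sum_card_extensions_le)
    show "finite deficient" "finite non_edges"
      using finite_cores finite_V by (auto simp: deficient_def non_edges_def)
    show "finite D \<and> card D = d" if "D \<in> non_edges" for D
      using that finite_V by (auto simp: non_edges_def intro: rev_finite_subset)
  qed
  finally show ?thesis .
qed

lemma card_missing_ge:
  assumes "S \<in> deficient"
  shows "real n - 2 * real (card J) - (real d - 1) \<le> real (card (V - S - extensions S))"
proof -
  have S: "S \<subseteq> V" "card S = d - 1" "card (extensions S) \<le> card J"
    using assms by (auto simp: deficient_def cores_def)
  have "card (V - S - extensions S) = card (V - S) - card (extensions S)"
    by (rule card_Diff_subset) (auto simp: extensions_def intro: rev_finite_subset[OF finite_V])
  moreover have "card (V - S) = card V - card S"
    using S(1) finite_V by (simp add: card_Diff_subset finite_subset)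
  moreover have "card S \<le> card V"
    using S(1) finite_V by (rule card_mono[rotated])
  ultimately show ?thesis
    using S(2,3) card_V J_sub d_pos card_mono[OF _ J_sub]
    by (simp add: of_nat_diff)
qed

text \<open>Each deficient S misses at least n/4 of the d-subsets of V containing it, and every
  non-edge of G_J is counted at most d times, so there are at most 4dK of them.\<close>
lemma card_deficient_le:
  assumes J: "real (card J) \<le> real n / 4" and n: "4 * d \<le> n"
    and edges: "real (card V choose d) - K * real n \<le> real (card (edges_G F J))"
  shows "real (card deficient) \<le> 4 * real d * K"
proof -
  have "real n / 4 \<le> real n - 2 * real (card J) - (real d - 1)"
    using J n by linarith
  then have "real (card deficient) * (real n / 4)
      \<le> real (card deficient) * (real n - 2 * real (card J) - (real d - 1))"
    by (rule mult_left_mono) simp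
  also have "\<dots> = (\<Sum>S\<in>deficient. real n - 2 * real (card J) - (real d - 1))"
    by simp
  also have "\<dots> \<le> (\<Sum>S\<in>deficient. real (card (V - S - extensions S)))"
    by (rule sum_mono) (rule card_missing_ge)
  also have "\<dots> \<le> real d * real (card non_edges)"
    using sum_card_missing_le by (simp flip: of_nat_sum of_nat_mult)
  also have "\<dots> \<le> real d * (K * real n)"
    using edges by (intro mult_left_mono) (simp_all add: card_non_edges)
  finally have "real (card deficient) * real n \<le> (4 * real d * K) * real n"
    by simp
  moreover have "0 < real n"
    using n d_pos by simp
  ultimately show ?thesis
    by simp
qed

lemma card_T_bound:
  assumes "real (card J) \<le> real n / 4" and "4 * d \<le> n"
    and "real ((n - card J) choose d) - K * real n \<le> real (card (edges_G F J))"
  shows "real (card T) \<le> (real (card J) - 1) * real ((n - card J) choose (d - 1)) + 4 * real d * K"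
  using card_T_le_deficient card_deficient_le[OF assms[unfolded card_V[symmetric]]]
  by (simp add: card_cores card_V)

end

theorem claim3p10:
  fixes d :: nat
  assumes "d \<ge> 2"
  shows "\<exists>C::real. C > 0 \<and> (\<exists>n0::nat. \<forall>n\<ge>n0.
     \<forall>(F::nat set set) (B::nat set \<Rightarrow> nat set) (J::nat set) (K::real).
       (\<forall>X\<in>F. X \<subseteq> {1..n} \<and> card X = d + 1) \<longrightarrow>
       vc_dim_le F d \<longrightarrow>
       max_admissible_choice F B \<longrightarrow>
       J \<subseteq> {1..n} \<longrightarrow> real (card J) \<le> real n / 4 \<longrightarrow>
       K \<ge> 0 \<longrightarrow>
       real (card (edges_G F J)) \<ge> real ((n - card J) choose d) - K * real n \<longrightarrow>
       real (card (T4 F B d J \<union> T5 F B J))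
         \<le> (real (card J) - 1) * real ((n - card J) choose (d - 1)) + C * K)"
proof (intro exI conjI allI impI)
  show "(0::real) < 4 * real d"
    using assms by simp
  fix n F B J and K :: real
  assume n: "4 * d \<le> n" and F: "\<forall>X\<in>F. X \<subseteq> {1..n} \<and> card X = d + 1"
    and B: "max_admissible_choice F B" and J: "J \<subseteq> {1..n}" "real (card J) \<le> real n / 4"
    and edges: "real (card (edges_G F J)) \<ge> real ((n - card J) choose d) - K * real n"
  interpret admissible_family n d F B J
    using F B J(1) assms by unfold_locales (auto simp: max_admissible_choice_def)
  show "real (card (T4 F B d J \<union> T5 F B J))
      \<le> (real (card J) - 1) * real ((n - card J) choose (d - 1)) + 4 * real d * K"
    using card_T_bound[OF J(2) n edges] by (simp add: T_def)
qed

end
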